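(* Let $\phi=(\phi_i)_{i\ge1}$ be a sequence of real numbers and define $\mathcal{H}_0^{\phi}=1$ and, for $n\ge0$, $\mathcal{H}_{n+1}^{\phi}(x)=2x\mathcal{H}_n^{\phi}(x)-(\mathcal{H}_n^{\phi})'(x)+\phi_{n+1}\mathcal{H}_n^{\phi}(x)$. For $n\ge0$ let $\Phi_0^n=1$ and $\Phi_i^n=\sum_{1\le j_1<\dots<j_i\le n}\phi_{j_1}\cdots\phi_{j_i}$ for $1\le i\le n$ (so that $\prod_{i=1}^n(x+\phi_i)=\sum_{j=0}^n\Phi^n_{n-j}x^j$). Then for every $n\ge0$, $$\mathcal{H}_n^{\phi}(x)=\sum_{j=0}^n\Phi_{n-j}^nH_j(x).$$ Moreover, for every $l\ge1$ and every $n\ge l-1$, $$\mathcal{H}_{n+1}^{\phi}(x)=2x\mathcal{H}_n^{\phi^{\{l\}}}(x)-(\mathcal{H}_n^{\phi^{\{l\}}})'(x)+\phi_l\,\mathcal{H}_n^{\phi^{\{l\}}}(x),$$ where $\phi^{\{l\}}$ is the sequence obtained from $\phi$ by removing the term $\phi_l$, i.e. $\phi^{\{l\}}_i=\phi_i$ for $1\le i\le l-1$ and $\phi^{\{l\}}_i=\phi_{i+1}$ for $i\ge l$.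
   Context: $H_j$ denotes the standard (physicists') Hermite polynomial of degree $j$ (orthogonal with respect to $e^{-x^2}$, leading coefficient $2^j$). *)

theory Defs
  imports "HOL-Computational_Algebra.Polynomial"
begin

fun hermite :: "nat \<Rightarrow> real poly" where
  "hermite 0 = 1"
| "hermite (Suc 0) = [:0, 2:]"
| "hermite (Suc (Suc n)) = [:0, 2:] * hermite (Suc n) - smult (2 * real (Suc n)) (hermite n)"

text \<open>The generalized Hermite polynomials; phi is indexed from 1 (phi 0 is unused).\<close>
primrec gen_hermite :: "(nat \<Rightarrow> real) \<Rightarrow> nat \<Rightarrow> real poly" where
  "gen_hermite phi 0 = 1"
| "gen_hermite phi (Suc n) =
     [:0, 2:] * gen_hermite phi n - pderiv (gen_hermite phi n) + smult (phi (Suc n)) (gen_hermite phi n)"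

definition elem_sym :: "(nat \<Rightarrow> real) \<Rightarrow> nat \<Rightarrow> nat \<Rightarrow> real" where
  "elem_sym phi n i = (\<Sum>S\<in>{S. S \<subseteq> {1..n} \<and> card S = i}. \<Prod>j\<in>S. phi j)"

definition remove_term :: "(nat \<Rightarrow> real) \<Rightarrow> nat \<Rightarrow> nat \<Rightarrow> real" where
  "remove_term phi l = (\<lambda>i. if i < l then phi i else phi (Suc i))"

end

theory Submission
  imports Defs
begin

text \<open>The linear map sending \<open>x^j\<close> to \<open>H_j\<close> intertwines multiplication by \<open>x\<close> with the
  raising operator \<open>p \<mapsto> 2x p - p'\<close>, because \<open>H_(j+1) = 2x H_j - H_j'\<close>. So the recursion
  defining the generalized Hermite polynomials is the image of multiplication by \<open>x + \<phi>_(n+1)\<close>,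
  and the \<open>n\<close>-th one is the image of \<open>(x + \<phi>_1) \<cdots> (x + \<phi>_n)\<close>, whose coefficients are the
  elementary symmetric functions of \<open>\<phi>\<close>. The second identity is the commutativity of this
  product: the factor \<open>x + \<phi>_l\<close> may be taken last.\<close>

lemma smult_sum_right: "smult c (\<Sum>x\<in>A. f x) = (\<Sum>x\<in>A. smult c (f x))"
  by (induction A rule: infinite_finite_induct) (simp_all add: smult_add_right)

lemma prod_const_poly: "(\<Prod>i\<in>X. [:f i:]) = [:prod f X:]"
  by (induction X rule: infinite_finite_induct) (simp_all add: mult.commute)

lemma pderiv_hermite_Suc: "pderiv (hermite (Suc n)) = smult (2 * real (Suc n)) (hermite n)"
proof (induction n rule: hermite.induct)
  case 1
  show ?case by (simp add: pderiv_pCons)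
next
  case 2
  show ?case by (simp add: pderiv_pCons pderiv_mult pderiv_smult numeral_2_eq_2)
next
  case (3 n)
  let ?k = "2 * real (Suc (Suc n))"
  have "pderiv (hermite (Suc (Suc (Suc n))))
      = smult 2 (hermite (Suc (Suc n))) + [:0, 2:] * pderiv (hermite (Suc (Suc n)))
        - smult ?k (pderiv (hermite (Suc n)))"
    by (simp add: pderiv_diff pderiv_mult pderiv_smult pderiv_pCons)
  also have "\<dots> = smult 2 (hermite (Suc (Suc n)))
        + smult ?k ([:0, 2:] * hermite (Suc n) - smult (2 * real (Suc n)) (hermite n))"
    by (simp only: "3.IH") (simp del: hermite.simps add: algebra_simps smult_diff_right)
  also have "\<dots> = smult 2 (hermite (Suc (Suc n))) + smult ?k (hermite (Suc (Suc n)))"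
    by (simp only: hermite.simps(3))
  also have "\<dots> = smult (2 * real (Suc (Suc (Suc n)))) (hermite (Suc (Suc n)))"
    by (simp only: smult_add_left[symmetric]) simp
  finally show ?case .
qed

definition hermite_raise :: "real poly \<Rightarrow> real poly" where
  "hermite_raise p = [:0, 2:] * p - pderiv p"

lemma hermite_raise_hermite: "hermite_raise (hermite n) = hermite (Suc n)"
  by (cases n) (simp_all add: hermite_raise_def pderiv_hermite_Suc)

lemma hermite_raise_add: "hermite_raise (p + q) = hermite_raise p + hermite_raise q"
  by (simp add: hermite_raise_def pderiv_add algebra_simps smult_add_right)

lemma hermite_raise_smult: "hermite_raise (smult c p) = smult c (hermite_raise p)"
  by (simp add: hermite_raise_def pderiv_smult smult_diff_right)

lemma hermite_raise_sum: "hermite_raise (\<Sum>x\<in>A. f x) = (\<Sum>x\<in>A. hermite_raise (f x))"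
  by (induction A rule: infinite_finite_induct) (simp_all add: hermite_raise_add hermite_raise_def[of 0])

lemma gen_hermite_Suc_conv_raise:
  "gen_hermite phi (Suc n) = hermite_raise (gen_hermite phi n) + smult (phi (Suc n)) (gen_hermite phi n)"
  by (simp add: hermite_raise_def)

definition hermite_map :: "real poly \<Rightarrow> real poly" where
  "hermite_map q = (\<Sum>j\<le>degree q. smult (coeff q j) (hermite j))"

lemma hermite_map_conv_sum:
  assumes "degree q \<le> n"
  shows "hermite_map q = (\<Sum>j\<le>n. smult (coeff q j) (hermite j))"
  unfolding hermite_map_def
  by (rule sum.mono_neutral_left) (use assms in \<open>auto simp: coeff_eq_0\<close>)

lemma hermite_map_add: "hermite_map (p + q) = hermite_map p + hermite_map q"
proof -
  define n where "n = max (degree p) (degree q)"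
  have "degree (p + q) \<le> n" "degree p \<le> n" "degree q \<le> n"
    by (simp_all add: n_def degree_add_le)
  then show ?thesis
    by (simp add: hermite_map_conv_sum smult_add_left sum.distrib)
qed

lemma hermite_map_smult: "hermite_map (smult c q) = smult c (hermite_map q)"
proof -
  have "degree (smult c q) \<le> degree q" by simp
  then show ?thesis
    by (simp add: hermite_map_conv_sum[of _ "degree q"] smult_sum_right)
qed

lemma hermite_map_pCons_0: "hermite_map (pCons 0 q) = hermite_raise (hermite_map q)"
proof -
  have "hermite_map (pCons 0 q) = (\<Sum>j\<le>Suc (degree q). smult (coeff (pCons 0 q) j) (hermite j))"
    by (rule hermite_map_conv_sum) simp
  also have "\<dots> = (\<Sum>j\<le>degree q. smult (coeff q j) (hermite (Suc j)))"
    by (subst sum.atMost_Suc_shift) simp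
  also have "\<dots> = hermite_raise (hermite_map q)"
    by (simp add: hermite_map_def hermite_raise_sum hermite_raise_smult hermite_raise_hermite)
  finally show ?thesis .
qed

lemma hermite_map_mult_linear:
  "hermite_map (q * [:c, 1:]) = hermite_raise (hermite_map q) + smult c (hermite_map q)"
proof -
  have "q * [:c, 1:] = pCons 0 q + smult c q" by (simp add: algebra_simps)
  then show ?thesis by (simp only: hermite_map_add hermite_map_smult hermite_map_pCons_0)
qed

definition linear_factor_prod :: "(nat \<Rightarrow> real) \<Rightarrow> nat \<Rightarrow> real poly" where
  "linear_factor_prod phi n = (\<Prod>i=1..n. [:phi i, 1:])"

lemma linear_factor_prod_Suc:
  "linear_factor_prod phi (Suc n) = linear_factor_prod phi n * [:phi (Suc n), 1:]"
  by (simp add: linear_factor_prod_def prod.nat_ivl_Suc' mult.commute)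

lemma degree_linear_factor_prod: "degree (linear_factor_prod phi n) \<le> n"
  unfolding linear_factor_prod_def
  by (rule order.trans[OF degree_prod_sum_le]) (simp_all add: comp_def)

lemma gen_hermite_eq_hermite_map: "gen_hermite phi n = hermite_map (linear_factor_prod phi n)"
proof (induction n)
  case 0
  show ?case by (simp add: linear_factor_prod_def hermite_map_def)
next
  case (Suc n)
  then show ?case
    by (simp only: gen_hermite_Suc_conv_raise linear_factor_prod_Suc hermite_map_mult_linear)
qed

lemma coeff_linear_factor_prod:
  assumes "j \<le> n"
  shows "coeff (linear_factor_prod phi n) j = elem_sym phi n (n - j)"
proof -
  have "linear_factor_prod phi n = (\<Prod>i\<in>{1..n}. [:phi i:] + [:0, 1:])"
    by (simp add: linear_factor_prod_def)
  also have "\<dots> = (\<Sum>X\<in>Pow {1..n}. (\<Prod>i\<in>X. [:phi i:]) * (\<Prod>i\<in>{1..n} - X. [:0, 1:]))"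
    by (rule prod_add) simp
  also have "\<dots> = (\<Sum>X\<in>Pow {1..n}. monom (prod phi X) (n - card X))"
  proof (rule sum.cong)
    fix X assume "X \<in> Pow {1..n}"
    moreover from this have "finite X" by (auto intro: finite_subset)
    ultimately have "card ({1..n} - X) = n - card X" by (simp add: card_Diff_subset)
    then show "(\<Prod>i\<in>X. [:phi i:]) * (\<Prod>i\<in>{1..n} - X. [:0, 1:]) = monom (prod phi X) (n - card X)"
      by (simp add: prod_const_poly monom_altdef)
  qed simp
  finally have "coeff (linear_factor_prod phi n) j = (\<Sum>X\<in>Pow {1..n}. if n - card X = j then prod phi X else 0)"
    by (simp add: coeff_sum coeff_monom)
  also have "\<dots> = (\<Sum>X\<in>{X\<in>Pow {1..n}. n - card X = j}. prod phi X)"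
    by (rule sum.inter_filter[symmetric]) simp
  also have "{X\<in>Pow {1..n}. n - card X = j} = {X. X \<subseteq> {1..n} \<and> card X = n - j}"
  proof -
    have "X \<subseteq> {1..n} \<Longrightarrow> card X \<le> n" for X
      using card_mono[of "{1..n}" X] by simp
    then show ?thesis using assms by auto
  qed
  finally show ?thesis by (simp add: elem_sym_def)
qed

lemma linear_factor_prod_remove_term:
  assumes "1 \<le> l" "l - 1 \<le> n"
  shows "linear_factor_prod phi (Suc n) = linear_factor_prod (remove_term phi l) n * [:phi l, 1:]"
  using assms(2)
proof (induction n rule: nat_induct_at_least)
  case base
  have "linear_factor_prod (remove_term phi l) (l - 1) = linear_factor_prod phi (l - 1)"
    unfolding linear_factor_prod_def by (rule prod.cong) (auto simp: remove_term_def)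
  then show ?case
    using linear_factor_prod_Suc[of phi "l - 1"] assms(1) by simp
next
  case (Suc n)
  have "remove_term phi l (Suc n) = phi (Suc (Suc n))"
    using Suc.hyps assms(1) by (auto simp: remove_term_def)
  then have "linear_factor_prod (remove_term phi l) (Suc n)
      = linear_factor_prod (remove_term phi l) n * [:phi (Suc (Suc n)), 1:]"
    by (simp only: linear_factor_prod_Suc)
  moreover have "linear_factor_prod phi (Suc (Suc n))
      = linear_factor_prod (remove_term phi l) n * [:phi l, 1:] * [:phi (Suc (Suc n)), 1:]"
    by (simp only: linear_factor_prod_Suc[of phi "Suc n"] Suc.IH)
  ultimately show ?case by (simp only: mult_ac)
qed

theorem lemma3p5:
  fixes phi :: "nat \<Rightarrow> real"
  shows "(\<forall>n. gen_hermite phi n = (\<Sum>j\<le>n. smult (elem_sym phi n (n - j)) (hermite j)))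
       \<and> (\<forall>l n. 1 \<le> l \<longrightarrow> l - 1 \<le> n \<longrightarrow>
            gen_hermite phi (Suc n) =
              [:0, 2:] * gen_hermite (remove_term phi l) n
              - pderiv (gen_hermite (remove_term phi l) n)
              + smult (phi l) (gen_hermite (remove_term phi l) n))"
proof (intro conjI allI impI)
  fix n
  show "gen_hermite phi n = (\<Sum>j\<le>n. smult (elem_sym phi n (n - j)) (hermite j))"
    unfolding gen_hermite_eq_hermite_map hermite_map_conv_sum[OF degree_linear_factor_prod]
    by (simp add: coeff_linear_factor_prod)
next
  fix l n :: nat
  assume "1 \<le> l" "l - 1 \<le> n"
  show "gen_hermite phi (Suc n) =
              [:0, 2:] * gen_hermite (remove_term phi l) n
              - pderiv (gen_hermite (remove_term phi l) n)
              + smult (phi l) (gen_hermite (remove_term phi l) n)"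
    unfolding gen_hermite_eq_hermite_map linear_factor_prod_remove_term[OF \<open>1 \<le> l\<close> \<open>l - 1 \<le> n\<close>]
    by (simp only: hermite_map_mult_linear hermite_raise_def)
qed

end
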